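(* Let $A=\{1/n:n\in\mathbb{Z}\setminus\{0\}\}$ and $B=\{\sqrt2/n:n\in\mathbb{Z}\setminus\{0\}\}$. Define $f,g:\mathbb{R}\to\mathbb{R}$ by $f(x)=x$ for $x\in A\cup\{0\}$, $f(x)=-1$ for $x>0$, $x\notin A$, $f(x)=1$ for $x<0$, $x\notin A$; and $g(x)=x$ for $x\in B\cup\{0\}$, $g(x)=-2$ for $x>0$, $x\notin B$, $g(x)=2$ for $x<0$, $x\notin B$. Then $f$ and $g$ are weakly symmetrically continuous at $0$, but none of $f+g$, $f-g$, $\max\{f,g\}$, $\min\{f,g\}$ is weakly symmetrically continuous at $0$.
   Context: For $D\subseteq\mathbb{R}$ nonempty and $a\in D$, $S_a(D)$ is the set of all sequences $(h_n)$ of positive reals converging to $0$ with $a\pm h_n\in D$ for every $n$. A function $f:D\to\mathbb{R}$ is weakly symmetrically continuous at $a$ if, whenever $S_a(D)\neq\emptyset$, there exists $(h_n)\in S_a(D)$ with $f(a+h_n)-f(a-h_n)\to0$. *)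

theory Defs
  imports "HOL-Analysis.Analysis"
begin

definition sym_seqs :: "real set \<Rightarrow> real \<Rightarrow> (nat \<Rightarrow> real) set" where
  "sym_seqs D a = {h. (\<forall>n. h n > 0) \<and> h \<longlonglongrightarrow> 0 \<and> (\<forall>n. a + h n \<in> D \<and> a - h n \<in> D)}"

definition weakly_sym_cont :: "real set \<Rightarrow> (real \<Rightarrow> real) \<Rightarrow> real \<Rightarrow> bool" where
  "weakly_sym_cont D f a \<longleftrightarrow>
     (sym_seqs D a \<noteq> {} \<longrightarrow>
       (\<exists>h\<in>sym_seqs D a. (\<lambda>n. f (a + h n) - f (a - h n)) \<longlonglongrightarrow> 0))"

definition setA :: "real set" where
  "setA = {1 / real_of_int n | n. n \<noteq> 0}"

definition setB :: "real set" where
  "setB = {sqrt 2 / real_of_int n | n. n \<noteq> 0}"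

definition fex :: "real \<Rightarrow> real" where
  "fex x = (if x \<in> setA \<union> {0} then x else if x > 0 then -1 else 1)"

definition gex :: "real \<Rightarrow> real" where
  "gex x = (if x \<in> setB \<union> {0} then x else if x > 0 then -2 else 2)"

end

theory Submission
  imports Defs "HOL-Computational_Algebra.Primes"
begin

(* - Along h_n = c/(n+1) with h_n in A (resp. B) the symmetric difference of fex
     (resp. gex) is 2 h_n, which tends to 0; hence both are weakly symmetrically
     continuous at 0 (lemma weakly_sym_cont_at_0_by_sequence).
   - Since sqrt 2 is irrational, A and B are disjoint, so every x > 0 lies in
     A, in B, or in neither, and in each case the values of fex and gex at
     \<plusminus>x are explicit (lemma fex_gex_cases).  A short computation shows that
     for 0 < x < 1/2 the symmetric difference of fex+gex, fex-gex, max and min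
     has absolute value at least 1/2, which rules out weak symmetric continuity
     (lemma not_weakly_sym_cont_if_jump). *)

(* Needed to separate A from B: 1/n = sqrt 2/m would make sqrt 2 rational. *)
lemma sqrt_prime_not_rat:
  fixes p :: nat
  assumes "prime p"
  shows "sqrt (real p) \<notin> \<rat>"
proof
  assume "sqrt (real p) \<in> \<rat>"
  then obtain m n :: nat
    where n: "n \<noteq> 0" and sqrt_rat: "\<bar>sqrt p\<bar> = m / n" and "coprime m n"
    by (rule Rats_abs_nat_div_natE)
  have eq: "m\<^sup>2 = p * n\<^sup>2"
  proof -
    from n sqrt_rat have "m = \<bar>sqrt p\<bar> * n" by simp
    then have "m\<^sup>2 = (sqrt p)\<^sup>2 * n\<^sup>2" by (simp add: power_mult_distrib)
    then show ?thesis by (metis of_nat_eq_iff of_nat_mult of_nat_power of_nat_0_le_iff real_sqrt_pow2)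
  qed
  have "p dvd m"
  proof -
    from eq have "p dvd m\<^sup>2" ..
    with assms show ?thesis by (rule prime_dvd_power)
  qed
  then obtain k where "m = p * k" ..
  with eq have "p * n\<^sup>2 = p\<^sup>2 * k\<^sup>2" by algebra
  with assms have "n\<^sup>2 = p * k\<^sup>2" by (simp add: power2_eq_square prime_gt_0_nat)
  then have "p dvd n\<^sup>2" ..
  with assms have "p dvd n" by (rule prime_dvd_power)
  with \<open>p dvd m\<close> \<open>coprime m n\<close> have "is_unit p" using coprime_common_divisor by blast
  with assms show False by simp
qed

lemma setA_uminus: "x \<in> setA \<Longrightarrow> -x \<in> setA"
proof -
  assume "x \<in> setA"
  then obtain n where "x = 1 / real_of_int n" "n \<noteq> 0" unfolding setA_def by auto
  then have "-x = 1 / real_of_int (-n)" "-n \<noteq> 0" by auto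
  then show ?thesis unfolding setA_def by blast
qed

lemma setB_uminus: "x \<in> setB \<Longrightarrow> -x \<in> setB"
proof -
  assume "x \<in> setB"
  then obtain n where "x = sqrt 2 / real_of_int n" "n \<noteq> 0" unfolding setB_def by auto
  then have "-x = sqrt 2 / real_of_int (-n)" "-n \<noteq> 0" by auto
  then show ?thesis unfolding setB_def by blast
qed

lemma setA_setB_disjoint: "x \<in> setA \<Longrightarrow> x \<notin> setB"
proof
  assume "x \<in> setA" "x \<in> setB"
  then obtain n m where "x = 1 / real_of_int n" "n \<noteq> 0"
    "x = sqrt 2 / real_of_int m" "m \<noteq> 0" unfolding setA_def setB_def by blast
  then have "sqrt (real 2) = real_of_int m / real_of_int n" by (auto simp: field_simps)
  then have "sqrt (real 2) \<in> \<rat>" by simp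
  then show False using sqrt_prime_not_rat[of 2] by simp
qed

lemma inverse_Suc_in_setA: "1 / real (Suc n) \<in> setA"
  unfolding setA_def by (rule CollectI, rule exI[of _ "int (Suc n)"]) simp

lemma sqrt2_div_Suc_in_setB: "sqrt 2 / real (Suc n) \<in> setB"
  unfolding setB_def by (rule CollectI, rule exI[of _ "int (Suc n)"]) simp

lemma fex_pm:
  assumes "x > 0"
  shows "fex x = (if x \<in> setA then x else -1)"
    and "fex (-x) = (if x \<in> setA then -x else 1)"
  unfolding fex_def using assms setA_uminus[of x] setA_uminus[of "-x"] by auto

lemma gex_pm:
  assumes "x > 0"
  shows "gex x = (if x \<in> setB then x else -2)"
    and "gex (-x) = (if x \<in> setB then -x else 2)"
  unfolding gex_def using assms setB_uminus[of x] setB_uminus[of "-x"] by auto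

lemma fex_gex_cases:
  assumes "x > 0"
  obtains "fex x = x" "fex (-x) = -x" "gex x = -2" "gex (-x) = 2"
        | "fex x = -1" "fex (-x) = 1" "gex x = x" "gex (-x) = -x"
        | "fex x = -1" "fex (-x) = 1" "gex x = -2" "gex (-x) = 2"
  using fex_pm[OF assms] gex_pm[OF assms] setA_setB_disjoint[of x] by metis

(* The sequences c/(n+1) witness that the condition of weak symmetric
   continuity on the whole line is never vacuous. *)
lemma scaled_inverse_Suc_in_sym_seqs:
  assumes "c > 0"
  shows "(\<lambda>n. c / real (Suc n)) \<in> sym_seqs UNIV a"
proof -
  have "(\<lambda>n. c * inverse (real (Suc n))) \<longlonglongrightarrow> 0"
    by (rule tendsto_mult_right_zero[OF LIMSEQ_inverse_real_of_nat])
  then show ?thesis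
    unfolding sym_seqs_def using assms by (simp add: divide_inverse)
qed

lemma weakly_sym_cont_at_0_by_sequence:
  assumes "c > 0"
    and diff: "\<And>n. f (c / real (Suc n)) - f (- (c / real (Suc n))) = 2 * (c / real (Suc n))"
  shows "weakly_sym_cont UNIV f 0"
proof -
  let ?h = "\<lambda>n. c / real (Suc n)"
  have h: "?h \<in> sym_seqs UNIV 0"
    using assms(1) by (rule scaled_inverse_Suc_in_sym_seqs)
  then have "?h \<longlonglongrightarrow> 0" unfolding sym_seqs_def by simp
  then have "(\<lambda>n. 2 * ?h n) \<longlonglongrightarrow> 0" by (rule tendsto_mult_right_zero)
  moreover have "(\<lambda>n. f (0 + ?h n) - f (0 - ?h n)) = (\<lambda>n. 2 * ?h n)"
    using diff by simp
  ultimately have "(\<lambda>n. f (0 + ?h n) - f (0 - ?h n)) \<longlonglongrightarrow> 0" by simp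
  with h show ?thesis unfolding weakly_sym_cont_def by auto
qed

lemma not_weakly_sym_cont_if_jump:
  fixes F :: "real \<Rightarrow> real"
  assumes "\<delta> > 0" "\<epsilon> > 0"
    and jump: "\<And>x. 0 < x \<Longrightarrow> x < \<delta> \<Longrightarrow> \<bar>F (a + x) - F (a - x)\<bar> \<ge> \<epsilon>"
  shows "\<not> weakly_sym_cont UNIV F a"
proof
  assume "weakly_sym_cont UNIV F a"
  moreover have "sym_seqs UNIV a \<noteq> {}"
    using scaled_inverse_Suc_in_sym_seqs[of 1 a] by auto
  ultimately obtain h where h: "h \<in> sym_seqs UNIV a"
    and lim: "(\<lambda>n. F (a + h n) - F (a - h n)) \<longlonglongrightarrow> 0"
    unfolding weakly_sym_cont_def by blast
  from h have pos: "\<And>n. h n > 0" and "h \<longlonglongrightarrow> 0" unfolding sym_seqs_def by auto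
  have "eventually (\<lambda>n. dist (h n) 0 < \<delta>) sequentially"
    using \<open>h \<longlonglongrightarrow> 0\<close> \<open>\<delta> > 0\<close> by (rule tendstoD)
  moreover have "eventually (\<lambda>n. dist (F (a + h n) - F (a - h n)) 0 < \<epsilon>) sequentially"
    using lim \<open>\<epsilon> > 0\<close> by (rule tendstoD)
  ultimately have "eventually (\<lambda>n. False) sequentially"
  proof (rule eventually_elim2)
    fix n
    assume "dist (h n) 0 < \<delta>" "dist (F (a + h n) - F (a - h n)) 0 < \<epsilon>"
    with jump[of "h n"] pos[of n] show False by auto
  qed
  then show False by simp
qed

(* For 0 < x < 1/2 the symmetric differences at x of the four combinations are,
   in the three cases of fex_gex_cases: 2x-4, 2x-2, -6 (sum); 2x+4, -2x-2, 2
   (difference); x-2, x-1, -3 (max); x-2, x-1, -3 (min). *)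
lemma combination_jumps:
  assumes "0 < x" "x < 1/2"
  shows "1/2 \<le> \<bar>(fex x + gex x) - (fex (-x) + gex (-x))\<bar>"
    and "1/2 \<le> \<bar>(fex x - gex x) - (fex (-x) - gex (-x))\<bar>"
    and "1/2 \<le> \<bar>max (fex x) (gex x) - max (fex (-x)) (gex (-x))\<bar>"
    and "1/2 \<le> \<bar>min (fex x) (gex x) - min (fex (-x)) (gex (-x))\<bar>"
proof -
  from assms(1) show "1/2 \<le> \<bar>(fex x + gex x) - (fex (-x) + gex (-x))\<bar>"
    by (rule fex_gex_cases) (use assms in simp_all)
  from assms(1) show "1/2 \<le> \<bar>(fex x - gex x) - (fex (-x) - gex (-x))\<bar>"
    by (rule fex_gex_cases) (use assms in simp_all)
  from assms(1) show "1/2 \<le> \<bar>max (fex x) (gex x) - max (fex (-x)) (gex (-x))\<bar>"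
    by (rule fex_gex_cases) (use assms in simp_all)
  from assms(1) show "1/2 \<le> \<bar>min (fex x) (gex x) - min (fex (-x)) (gex (-x))\<bar>"
    by (rule fex_gex_cases) (use assms in simp_all)
qed

theorem mainTheorem6:
  shows "weakly_sym_cont UNIV fex 0 \<and> weakly_sym_cont UNIV gex 0 \<and>
         \<not> weakly_sym_cont UNIV (\<lambda>x. fex x + gex x) 0 \<and>
         \<not> weakly_sym_cont UNIV (\<lambda>x. fex x - gex x) 0 \<and>
         \<not> weakly_sym_cont UNIV (\<lambda>x. max (fex x) (gex x)) 0 \<and>
         \<not> weakly_sym_cont UNIV (\<lambda>x. min (fex x) (gex x)) 0"
proof (intro conjI)
  show "weakly_sym_cont UNIV fex 0"
    by (rule weakly_sym_cont_at_0_by_sequence[of 1])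
       (use inverse_Suc_in_setA in \<open>simp_all add: fex_pm\<close>)
  show "weakly_sym_cont UNIV gex 0"
    by (rule weakly_sym_cont_at_0_by_sequence[of "sqrt 2"])
       (use sqrt2_div_Suc_in_setB in \<open>simp_all add: gex_pm\<close>)
  show "\<not> weakly_sym_cont UNIV (\<lambda>x. fex x + gex x) 0"
    by (rule not_weakly_sym_cont_if_jump[of "1/2" "1/2"]) (use combination_jumps in auto)
  show "\<not> weakly_sym_cont UNIV (\<lambda>x. fex x - gex x) 0"
    by (rule not_weakly_sym_cont_if_jump[of "1/2" "1/2"]) (use combination_jumps in auto)
  show "\<not> weakly_sym_cont UNIV (\<lambda>x. max (fex x) (gex x)) 0"
    by (rule not_weakly_sym_cont_if_jump[of "1/2" "1/2"]) (use combination_jumps in auto)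
  show "\<not> weakly_sym_cont UNIV (\<lambda>x. min (fex x) (gex x)) 0"
    by (rule not_weakly_sym_cont_if_jump[of "1/2" "1/2"]) (use combination_jumps in auto)
qed

end
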